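(* Let $T\in\mathcal{L}(\mathcal{H})$ have closed range and let $n\ge 2$ be an integer. Suppose that $T^*T\big(N(T^{*i})\big)\subset N(T^{*i})$ and $TT^*\big(N(T^{i})\big)\subset N(T^{i})$ for every $i=1,\ldots,n-1$. Then for every $i=1,\ldots,n$, the operator $T^i$ has closed range (so $\omega(T^i)$ is defined) and $\omega(T^i)=\omega(T)^i$.
   Context: $\mathcal{H}$ is a Hilbert space, $\mathcal{L}(\mathcal{H})$ the bounded operators on it; $N(\cdot)$ denotes kernel. For $A$ with closed range, $A^\dagger$ is its Moore–Penrose inverse (unique solution of $AA^\dagger A=A$, $A^\dagger AA^\dagger=A^\dagger$, $(A^\dagger A)^*=A^\dagger A$, $(AA^\dagger)^*=AA^\dagger$), and the Cauchy dual of $A$ is $\omega(A)=A(A^*A)^\dagger=(A^* )^\dagger$. *)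

theory Defs
  imports "HOL-Analysis.Analysis"
begin

text \<open>Bounded operators on a (real) Hilbert space 'a are modelled as functions
  T :: 'a => 'a with bounded_linear T; composition is \<circ>, powers are T ^^ i,
  and the Hilbert adjoint is the library's adjoint.\<close>

definition op_ker :: "('a::real_vector \<Rightarrow> 'b::real_vector) \<Rightarrow> 'a set" where
  "op_ker A = {x. A x = 0}"

definition mp_inverse :: "('a::{real_inner,complete_space} \<Rightarrow> 'a) \<Rightarrow> ('a \<Rightarrow> 'a)" where
  "mp_inverse A = (THE B. bounded_linear B \<and> A \<circ> B \<circ> A = A \<and> B \<circ> A \<circ> B = B \<and>
      adjoint (B \<circ> A) = B \<circ> A \<and> adjoint (A \<circ> B) = A \<circ> B)"

definition cauchy_dual :: "('a::{real_inner,complete_space} \<Rightarrow> 'a) \<Rightarrow> ('a \<Rightarrow> 'a)" where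
  "cauchy_dual A = A \<circ> mp_inverse (adjoint A \<circ> A)"

end

theory Submission
  imports Defs
begin

text \<open>
  A bounded operator T with closed range has a bounded Moore--Penrose inverse G, and
  \<omega>(T) = G*. Suppose that T^j has closed range with Moore--Penrose inverse G^j for all j \<le> i.
  Since ranges of operators with closed range are the orthogonal complements of the kernels of
  their adjoints, the kernel hypotheses then say that T*T maps R(T^j) into itself and that TT*
  maps R(T*^i) into itself. These are Greville's conditions R(A*AB) \<subseteq> R(B) and
  R(BB*A*) \<subseteq> R(A*) for the reverse order law (AB)^+ = B^+ A^+, applied to A = T^i and B = T.
  Hence G^(i+1) is the Moore--Penrose inverse of T^(i+1), so T^(i+1) has closed range and
  \<omega>(T^(i+1)) = (G^(i+1))* = \<omega>(T)^(i+1).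

  In infinite dimensions the existence of G rests on the projection theorem, the Riesz
  representation, and a Baire category argument showing that T is bounded below on the orthogonal
  complement of N(T).
\<close>

section \<open>Orthogonal projections in Hilbert spaces\<close>

lemma orthogonal_comp_iff: "x \<in> M\<^sup>\<bottom> \<longleftrightarrow> (\<forall>m\<in>M. m \<bullet> x = 0)"
  by (simp add: orthogonal_comp_def orthogonal_def)

lemma minimizing_sequence_Cauchy:
  fixes M :: "'a::real_inner set"
  assumes "convex M" and s: "\<And>n. s n \<in> M"
    and near: "\<And>n. (norm (x - s n))\<^sup>2 \<le> (infdist x M)\<^sup>2 + inverse (real (Suc n))"
  shows "Cauchy s"
proof -
  have bound: "(norm (s a - s b))\<^sup>2 \<le> 2 * inverse (real (Suc a)) + 2 * inverse (real (Suc b))"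
    for a b
  proof -
    let ?u = "x - s a" and ?v = "x - s b"
    have "(1/2) *\<^sub>R s a + (1/2) *\<^sub>R s b \<in> M"
      by (rule convexD[OF \<open>convex M\<close> s s]) auto
    then have "infdist x M \<le> norm (x - ((1/2) *\<^sub>R s a + (1/2) *\<^sub>R s b))"
      by (metis infdist_le dist_norm)
    also have "x - ((1/2) *\<^sub>R s a + (1/2) *\<^sub>R s b) = (1/2) *\<^sub>R (?u + ?v)"
      by (simp add: algebra_simps flip: scaleR_add_left)
    finally have "(2 * infdist x M)\<^sup>2 \<le> (norm (?u + ?v))\<^sup>2"
      using infdist_nonneg by (intro power_mono) auto
    moreover have "(norm (?u - ?v))\<^sup>2 + (norm (?u + ?v))\<^sup>2 = 2 * (norm ?u)\<^sup>2 + 2 * (norm ?v)\<^sup>2"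
      by (simp add: power2_norm_eq_inner inner_diff_left inner_diff_right inner_add_left
          inner_add_right inner_commute)
    ultimately show ?thesis
      using near[of a] near[of b] by (simp add: norm_minus_commute power_mult_distrib)
  qed
  show ?thesis
  proof (rule metric_CauchyI)
    fix e :: real
    assume "e > 0"
    then obtain N where N: "inverse (real (Suc N)) < e\<^sup>2 / 4"
      using reals_Archimedean[of "e\<^sup>2 / 4"] by auto
    have "dist (s a) (s b) < e" if "a \<ge> N" "b \<ge> N" for a b
    proof -
      have "inverse (real (Suc a)) \<le> inverse (real (Suc N))"
        "inverse (real (Suc b)) \<le> inverse (real (Suc N))"
        using that by (simp_all add: le_imp_inverse_le)
      with bound[of a b] N have "(norm (s a - s b))\<^sup>2 < e\<^sup>2"
        by linarith
      then show ?thesis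
        using \<open>e > 0\<close> by (simp add: dist_norm power_less_imp_less_base)
    qed
    then show "\<exists>N. \<forall>m\<ge>N. \<forall>n\<ge>N. dist (s m) (s n) < e"
      by blast
  qed
qed

lemma nearest_point_exists:
  fixes M :: "'a::{real_inner,complete_space} set"
  assumes "convex M" "closed M" "M \<noteq> {}"
  shows "\<exists>p\<in>M. \<forall>m\<in>M. dist x p \<le> dist x m"
proof -
  define d where "d = infdist x M"
  define r where "r n = sqrt (d\<^sup>2 + inverse (real (Suc n)))" for n
  have "\<exists>a\<in>M. dist x a < r n" for n
  proof -
    have "d < r n"
      unfolding r_def by (rule real_less_rsqrt) simp
    then show ?thesis
      using cInf_lessD[of "dist x ` M"] \<open>M \<noteq> {}\<close> by (auto simp: d_def infdist_notempty)
  qed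
  then obtain s where s: "\<And>n. s n \<in> M" and s_near: "\<And>n. dist x (s n) < r n"
    by metis
  have "(norm (x - s n))\<^sup>2 \<le> (infdist x M)\<^sup>2 + inverse (real (Suc n))" for n
  proof -
    have "(dist x (s n))\<^sup>2 \<le> (r n)\<^sup>2"
      using s_near[of n] by (intro power_mono) auto
    then show ?thesis
      by (simp add: r_def d_def dist_norm)
  qed
  with \<open>convex M\<close> s have "Cauchy s"
    by (rule minimizing_sequence_Cauchy)
  then obtain p where lim: "s \<longlonglongrightarrow> p"
    using Cauchy_convergent_iff convergent_def by blast
  have "p \<in> M"
    using \<open>closed M\<close> s lim by (rule closed_sequentially)
  have "(\<lambda>n. r n) \<longlonglongrightarrow> sqrt (d\<^sup>2 + 0)"
    unfolding r_def by (intro tendsto_intros LIMSEQ_inverse_real_of_nat)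
  then have "dist x p \<le> sqrt (d\<^sup>2 + 0)"
    using s_near by (intro LIMSEQ_le[OF tendsto_dist[OF tendsto_const lim]]) (auto intro: less_imp_le)
  then have "dist x p \<le> dist x m" if "m \<in> M" for m
    using infdist_le[OF that, of x] infdist_nonneg[of x M] by (simp add: d_def)
  with \<open>p \<in> M\<close> show ?thesis
    by blast
qed

lemma orthogonal_projection_exists:
  fixes M :: "'a::{real_inner,complete_space} set"
  assumes "subspace M" "closed M"
  shows "\<exists>p\<in>M. x - p \<in> M\<^sup>\<bottom>"
proof -
  obtain p where "p \<in> M" and nearest: "\<And>m. m \<in> M \<Longrightarrow> dist x p \<le> dist x m"
    using nearest_point_exists[of M x] assms subspace_imp_convex subspace_0 by blast
  have "m \<bullet> (x - p) = 0" if "m \<in> M" "m \<noteq> 0" for m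
  proof -
    define a where "a = m \<bullet> (x - p)"
    define t where "t = a / (m \<bullet> m)"
    have "p + t *\<^sub>R m \<in> M"
      using \<open>p \<in> M\<close> \<open>m \<in> M\<close> \<open>subspace M\<close> by (simp add: subspace_add subspace_scale)
    then have "(norm (x - p))\<^sup>2 \<le> (norm (x - p - t *\<^sub>R m))\<^sup>2"
      using nearest by (simp add: dist_norm diff_diff_eq power_mono)
    also have "\<dots> = (norm (x - p))\<^sup>2 - 2 * t * a + t\<^sup>2 * (m \<bullet> m)"
      unfolding power2_norm_eq_inner a_def
      by (simp add: inner_diff_left inner_diff_right inner_commute power2_eq_square algebra_simps)
    also have "\<dots> = (norm (x - p))\<^sup>2 - a\<^sup>2 / (m \<bullet> m)"
      using \<open>m \<noteq> 0\<close> by (simp add: t_def power2_eq_square field_simps)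
    finally have "a\<^sup>2 / (m \<bullet> m) \<le> 0"
      by simp
    moreover have "m \<bullet> m > 0"
      using \<open>m \<noteq> 0\<close> by simp
    ultimately show ?thesis
      by (simp add: a_def divide_le_0_iff)
  qed
  with \<open>p \<in> M\<close> show ?thesis
    by (force simp: orthogonal_comp_iff)
qed

definition orthogonal_projection :: "'a::real_inner set \<Rightarrow> 'a \<Rightarrow> 'a" where
  "orthogonal_projection M x = (SOME p. p \<in> M \<and> x - p \<in> M\<^sup>\<bottom>)"

context
  fixes M :: "'a::{real_inner,complete_space} set"
  assumes subspace: "subspace M" and closed: "closed M"
begin

lemma orthogonal_projection_in: "orthogonal_projection M x \<in> M"
  and orthogonal_projection_orthogonal: "x - orthogonal_projection M x \<in> M\<^sup>\<bottom>"
proof -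
  have "\<exists>p. p \<in> M \<and> x - p \<in> M\<^sup>\<bottom>"
    using orthogonal_projection_exists[OF subspace closed] by blast
  from someI_ex[OF this] show "orthogonal_projection M x \<in> M" "x - orthogonal_projection M x \<in> M\<^sup>\<bottom>"
    unfolding orthogonal_projection_def by blast+
qed

lemma orthogonal_projection_unique:
  assumes "p \<in> M" "x - p \<in> M\<^sup>\<bottom>"
  shows "orthogonal_projection M x = p"
proof -
  let ?d = "orthogonal_projection M x - p"
  have "?d \<in> M"
    using orthogonal_projection_in assms(1) subspace by (simp add: subspace_diff)
  moreover have "(x - p) - (x - orthogonal_projection M x) \<in> M\<^sup>\<bottom>"
    using assms(2) orthogonal_projection_orthogonal by (rule subspace_diff[OF subspace_orthogonal_comp])
  then have "?d \<in> M\<^sup>\<bottom>"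
    by simp
  ultimately have "?d = 0"
    using orthogonal_Int_0[OF subspace] by blast
  then show ?thesis
    by simp
qed

lemma orthogonal_projection_id: "y \<in> M \<Longrightarrow> orthogonal_projection M y = y"
  by (rule orthogonal_projection_unique) (auto simp: orthogonal_comp_iff)

lemma orthogonal_projection_symmetric:
  "orthogonal_projection M x \<bullet> y = x \<bullet> orthogonal_projection M y"
proof -
  have "orthogonal_projection M y \<bullet> (x - orthogonal_projection M x) = 0"
    "orthogonal_projection M x \<bullet> (y - orthogonal_projection M y) = 0"
    using orthogonal_projection_in orthogonal_projection_orthogonal
    by (simp_all add: orthogonal_comp_iff)
  then show ?thesis
    by (simp add: inner_diff_left inner_diff_right inner_commute)
qed

lemma linear_orthogonal_projection: "linear (orthogonal_projection M)"
proof
  fix a b and r :: real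
  let ?P = "orthogonal_projection M"
  have "(a - ?P a) + (b - ?P b) \<in> M\<^sup>\<bottom>"
    by (intro subspace_add[OF subspace_orthogonal_comp] orthogonal_projection_orthogonal)
  then show "?P (a + b) = ?P a + ?P b"
    by (intro orthogonal_projection_unique)
      (simp_all add: orthogonal_projection_in subspace_add[OF subspace] algebra_simps)
  show "?P (r *\<^sub>R b) = r *\<^sub>R ?P b"
    by (intro orthogonal_projection_unique)
      (simp_all add: orthogonal_projection_in orthogonal_projection_orthogonal subspace_scale[OF subspace]
        subspace_scale[OF subspace_orthogonal_comp] flip: scaleR_diff_right)
qed

lemma norm_orthogonal_projection_le: "norm (orthogonal_projection M x) \<le> norm x"
proof -
  have "orthogonal_projection M x \<bullet> (x - orthogonal_projection M x) = 0"
    using orthogonal_projection_in orthogonal_projection_orthogonal by (simp add: orthogonal_comp_iff)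
  then have "(norm x)\<^sup>2 = (norm (orthogonal_projection M x))\<^sup>2 + (norm (x - orthogonal_projection M x))\<^sup>2"
    by (simp add: power2_norm_eq_inner inner_diff_left inner_diff_right inner_commute)
  then show ?thesis
    by (simp add: power2_le_imp_le)
qed

end

section \<open>Adjoints of bounded operators\<close>

lemma subspace_range: "bounded_linear T \<Longrightarrow> subspace (range T)"
  by (rule linear_subspace_image[OF bounded_linear.linear subspace_UNIV])

lemma subspace_op_ker: "bounded_linear T \<Longrightarrow> subspace (op_ker T)"
  unfolding op_ker_def by (rule linear_subspace_kernel[OF bounded_linear.linear])

lemma closed_op_ker:
  assumes "bounded_linear T"
  shows "closed (op_ker T)"
proof -
  have "closed (T -` {0})"
    by (rule continuous_closed_vimage) (auto intro: bounded_linear.continuous[OF assms])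
  then show ?thesis
    by (simp add: op_ker_def vimage_def)
qed

lemma riesz_representation:
  fixes f :: "'a::{real_inner,complete_space} \<Rightarrow> real"
  assumes "bounded_linear f"
  shows "\<exists>z. \<forall>x. f x = x \<bullet> z"
proof (cases "\<forall>x. f x = 0")
  case True
  then show ?thesis
    by (intro exI[of _ 0]) simp
next
  case False
  then obtain u where "f u \<noteq> 0"
    by auto
  interpret f: bounded_linear f by fact
  obtain p where "p \<in> op_ker f" and q_orth: "u - p \<in> (op_ker f)\<^sup>\<bottom>"
    using orthogonal_projection_exists[OF subspace_op_ker closed_op_ker] assms by blast
  define q where "q = u - p"
  have fq: "f q = f u"
    using \<open>p \<in> op_ker f\<close> by (simp add: q_def f.diff op_ker_def)
  then have "q \<bullet> q \<noteq> 0"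
    using \<open>f u \<noteq> 0\<close> by auto
  show ?thesis
  proof (intro exI allI)
    fix x
    have "x - (f x / f q) *\<^sub>R q \<in> op_ker f"
      using fq \<open>f u \<noteq> 0\<close> by (simp add: f.diff f.scale op_ker_def)
    then have "(x - (f x / f q) *\<^sub>R q) \<bullet> q = 0"
      using q_orth by (simp add: q_def orthogonal_comp_iff)
    then have "x \<bullet> q = (f x / f q) * (q \<bullet> q)"
      by (simp add: inner_diff_left)
    with \<open>q \<bullet> q \<noteq> 0\<close> fq \<open>f u \<noteq> 0\<close> show "f x = x \<bullet> ((f q / (q \<bullet> q)) *\<^sub>R q)"
      by (simp add: field_simps)
  qed
qed

context
  fixes T :: "'a::{real_inner,complete_space} \<Rightarrow> 'b::real_inner"
  assumes bounded: "bounded_linear T"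
begin

text \<open>The library proves this only for Euclidean spaces; for Hilbert spaces it follows from the
  Riesz representation.\<close>

lemma adjoint_inner_right: "T x \<bullet> y = x \<bullet> adjoint T y"
proof -
  have "\<exists>z. \<forall>x. T x \<bullet> y = x \<bullet> z" for y
    by (rule riesz_representation)
      (use bounded_linear_compose[OF bounded_linear_inner_left bounded] in simp)
  then have "\<exists>g. \<forall>x y. T x \<bullet> y = x \<bullet> g y"
    by metis
  from someI_ex[OF this] show ?thesis
    unfolding adjoint_def by blast
qed

lemma adjoint_inner_left: "adjoint T y \<bullet> x = y \<bullet> T x"
  by (metis adjoint_inner_right inner_commute)

lemma bounded_linear_adjoint: "bounded_linear (adjoint T)"
proof -
  have "linear (adjoint T)"
    by (rule linearI; rule vector_eq_ldot[THEN iffD1], intro allI)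
      (simp_all add: adjoint_inner_right[symmetric] inner_add_right)
  moreover obtain K where K: "\<And>x. norm (T x) \<le> norm x * K" "K > 0"
    using bounded_linear.pos_bounded[OF bounded] by blast
  have "norm (adjoint T y) \<le> norm y * K" for y
  proof -
    have "norm (adjoint T y) * norm (adjoint T y) = T (adjoint T y) \<bullet> y"
      by (simp add: adjoint_inner_right flip: power2_eq_square power2_norm_eq_inner)
    also have "\<dots> \<le> norm (adjoint T y) * K * norm y"
      using norm_cauchy_schwarz[of "T (adjoint T y)" y] K(1)[of "adjoint T y"]
      by (meson mult_right_mono norm_ge_zero order_trans)
    finally show ?thesis
      using K(2) by (cases "adjoint T y = 0") (auto simp: algebra_simps)
  qed
  ultimately show ?thesis
    by (intro bounded_linear_intro[where K = K]) (auto simp: linear_add linear_scale)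
qed

lemma adjoint_comp_self_symmetric: "adjoint T (T x) \<bullet> x' = x \<bullet> adjoint T (T x')"
  by (simp add: adjoint_inner_left adjoint_inner_right)

lemma comp_adjoint_self_symmetric: "T (adjoint T y) \<bullet> y' = y \<bullet> T (adjoint T y')"
  by (simp add: adjoint_inner_left adjoint_inner_right)

lemma op_ker_adjoint: "op_ker (adjoint T) = (range T)\<^sup>\<bottom>"
proof -
  have "adjoint T y = 0 \<longleftrightarrow> (\<forall>x. x \<bullet> adjoint T y = x \<bullet> 0)" for y
    by (rule vector_eq_ldot[symmetric])
  then show ?thesis
    by (auto simp: op_ker_def orthogonal_comp_iff adjoint_inner_right[symmetric])
qed

end

lemma adjoint_adjoint_bounded:
  fixes T :: "'a::{real_inner,complete_space} \<Rightarrow> 'b::{real_inner,complete_space}"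
  assumes "bounded_linear T"
  shows "adjoint (adjoint T) = T"
  by (rule adjoint_unique) (simp add: adjoint_inner_left[OF assms])

lemma adjoint_comp:
  fixes f :: "'b::{real_inner,complete_space} \<Rightarrow> 'c::real_inner"
    and g :: "'a::{real_inner,complete_space} \<Rightarrow> 'b"
  assumes "bounded_linear f" "bounded_linear g"
  shows "adjoint (f \<circ> g) = adjoint g \<circ> adjoint f"
  by (rule adjoint_unique) (simp add: adjoint_inner_right[OF assms(1)] adjoint_inner_right[OF assms(2)])

lemma adjoint_id: "adjoint (id :: 'a::real_inner \<Rightarrow> 'a) = id"
  using adjoint_unique[of "id :: 'a \<Rightarrow> 'a" id] by simp

lemma bounded_linear_comp: "bounded_linear f \<Longrightarrow> bounded_linear g \<Longrightarrow> bounded_linear (f \<circ> g)"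
  using bounded_linear_compose[of f g] by (simp add: o_def)

lemma bounded_linear_funpow:
  fixes T :: "'a::real_normed_vector \<Rightarrow> 'a"
  shows "bounded_linear T \<Longrightarrow> bounded_linear (T ^^ n)"
  by (induction n) (simp_all add: id_def bounded_linear_ident bounded_linear_comp)

lemma adjoint_funpow:
  fixes T :: "'a::{real_inner,complete_space} \<Rightarrow> 'a"
  assumes "bounded_linear T"
  shows "adjoint (T ^^ n) = adjoint T ^^ n"
proof (induction n)
  case 0
  then show ?case
    by (simp only: funpow.simps(1) adjoint_id)
next
  case (Suc n)
  have "adjoint (T ^^ Suc n) = adjoint (T ^^ n \<circ> T)"
    by (simp only: funpow_Suc_right)
  also have "\<dots> = adjoint T \<circ> adjoint T ^^ n"
    by (simp only: adjoint_comp[OF bounded_linear_funpow[OF assms] assms] Suc)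
  finally show ?case
    by (simp only: funpow.simps(2))
qed

lemma adjoint_eq_self_iff:
  fixes F :: "'a::{real_inner,complete_space} \<Rightarrow> 'a"
  assumes "bounded_linear F"
  shows "adjoint F = F \<longleftrightarrow> (\<forall>x y. F x \<bullet> y = x \<bullet> F y)"
  using adjoint_inner_right[OF assms] adjoint_unique[of F F] by metis

section \<open>Moore--Penrose inverses\<close>

definition is_mp_inverse :: "('a::real_inner \<Rightarrow> 'a) \<Rightarrow> ('a \<Rightarrow> 'a) \<Rightarrow> bool" where
  "is_mp_inverse A B \<longleftrightarrow> bounded_linear B \<and> (\<forall>x. A (B (A x)) = A x) \<and> (\<forall>x. B (A (B x)) = B x) \<and>
     (\<forall>x y. B (A x) \<bullet> y = x \<bullet> B (A y)) \<and> (\<forall>x y. A (B x) \<bullet> y = x \<bullet> A (B y))"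

lemma is_mp_inverseD:
  assumes "is_mp_inverse A B"
  shows "bounded_linear B" "A (B (A x)) = A x" "B (A (B x)) = B x"
    "B (A x) \<bullet> y = x \<bullet> B (A y)" "A (B x) \<bullet> y = x \<bullet> A (B y)"
  using assms by (auto simp: is_mp_inverse_def)

lemma is_mp_inverse_adjointD:
  fixes A B :: "'a::{real_inner,complete_space} \<Rightarrow> 'a"
  assumes bounded: "bounded_linear A" and mp: "is_mp_inverse A B"
  shows "adjoint B (adjoint A y) = A (B y)"
    and "adjoint A (adjoint B y) = B (A y)"
    and "adjoint A (adjoint B (adjoint A y)) = adjoint A y"
    and "adjoint B (adjoint A (adjoint B y)) = adjoint B y"
proof -
  note D = is_mp_inverseD[OF mp]
  note A_adj = adjoint_inner_right[OF bounded] and B_adj = adjoint_inner_right[OF D(1)]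
  show "adjoint B (adjoint A y) = A (B y)"
    by (rule vector_eq_ldot[THEN iffD1]) (simp add: A_adj[symmetric] B_adj[symmetric] D(5))
  show "adjoint A (adjoint B y) = B (A y)"
    by (rule vector_eq_ldot[THEN iffD1]) (simp add: A_adj[symmetric] B_adj[symmetric] D(4))
  show "adjoint A (adjoint B (adjoint A y)) = adjoint A y"
    by (rule vector_eq_ldot[THEN iffD1]) (simp add: A_adj[symmetric] B_adj[symmetric] D(2))
  show "adjoint B (adjoint A (adjoint B y)) = adjoint B y"
    by (rule vector_eq_ldot[THEN iffD1]) (simp add: A_adj[symmetric] B_adj[symmetric] D(3))
qed

context
  fixes A B :: "'a::{real_inner,complete_space} \<Rightarrow> 'a"
  assumes bounded: "bounded_linear A" and mp: "is_mp_inverse A B"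
begin

lemma is_mp_inverse_adjoint: "is_mp_inverse (adjoint A) (adjoint B)"
  using is_mp_inverseD[OF mp] is_mp_inverse_adjointD[OF bounded mp]
  by (simp add: is_mp_inverse_def bounded_linear_adjoint)

lemma is_mp_inverse_unique:
  assumes mp': "is_mp_inverse A B'"
  shows "B' = B"
proof
  fix y
  note D = is_mp_inverseD[OF mp] and F = is_mp_inverse_adjointD[OF bounded mp]
  note D' = is_mp_inverseD[OF mp'] and F' = is_mp_inverse_adjointD[OF bounded mp']
  have "B y = B (A (B y))"
    by (simp add: D(3))
  also have "\<dots> = B (adjoint B (adjoint A y))"
    by (simp add: F(1))
  also have "\<dots> = B (adjoint B (adjoint A (adjoint B' (adjoint A y))))"
    by (simp add: F'(3))
  also have "\<dots> = B (A (B (adjoint B' (adjoint A y))))"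
    by (simp add: F(1))
  also have "\<dots> = B (A (B' y))"
    by (simp add: D(3) F'(1))
  finally have B_eq: "B y = B (A (B' y))" .
  have "B' y = B' (A (B' y))"
    by (simp add: D'(3))
  also have "\<dots> = adjoint A (adjoint B' (B' y))"
    by (simp add: F'(2))
  also have "\<dots> = adjoint A (adjoint B (adjoint A (adjoint B' (B' y))))"
    by (simp add: F(3))
  also have "\<dots> = adjoint A (adjoint B (B' (A (B' y))))"
    by (simp add: F'(2))
  also have "\<dots> = B (A (B' y))"
    by (simp add: D'(3) F(2))
  finally show "B' y = B y"
    by (simp add: B_eq)
qed

lemma mp_inverse_eq: "mp_inverse A = B"
  unfolding mp_inverse_def
proof (rule the_equality)
  have "adjoint (B \<circ> A) = B \<circ> A" "adjoint (A \<circ> B) = A \<circ> B"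
    using is_mp_inverseD[OF mp]
    by (simp_all add: adjoint_eq_self_iff bounded_linear_comp bounded)
  then show "bounded_linear B \<and> A \<circ> B \<circ> A = A \<and> B \<circ> A \<circ> B = B \<and>
      adjoint (B \<circ> A) = B \<circ> A \<and> adjoint (A \<circ> B) = A \<circ> B"
    using is_mp_inverseD[OF mp] by (simp add: fun_eq_iff)
next
  fix B'
  assume B': "bounded_linear B' \<and> A \<circ> B' \<circ> A = A \<and> B' \<circ> A \<circ> B' = B' \<and>
      adjoint (B' \<circ> A) = B' \<circ> A \<and> adjoint (A \<circ> B') = A \<circ> B'"
  then have "is_mp_inverse A B'"
    using adjoint_eq_self_iff[OF bounded_linear_comp[OF _ bounded], of B']
      adjoint_eq_self_iff[OF bounded_linear_comp[OF bounded], of B']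
    by (simp add: is_mp_inverse_def fun_eq_iff)
  then show "B' = B"
    by (rule is_mp_inverse_unique)
qed

lemma is_mp_inverse_gram: "is_mp_inverse (adjoint A \<circ> A) (B \<circ> adjoint B)"
proof -
  note D = is_mp_inverseD[OF mp] and F = is_mp_inverse_adjointD[OF bounded mp]
  have BM: "B (adjoint B (adjoint A (A x))) = B (A x)" for x
    by (simp add: F(1) D(2))
  have MB: "adjoint A (A (B (adjoint B x))) = B (A x)" for x
    by (metis F(1) F(2) F(4))
  show ?thesis
    unfolding is_mp_inverse_def
  proof (intro conjI allI)
    show "bounded_linear (B \<circ> adjoint B)"
      by (simp add: bounded_linear_comp bounded_linear_adjoint D(1))
    fix x y
    show "(adjoint A \<circ> A) ((B \<circ> adjoint B) ((adjoint A \<circ> A) x)) = (adjoint A \<circ> A) x"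
      by (simp only: comp_apply BM D(2))
    show "(B \<circ> adjoint B) ((adjoint A \<circ> A) ((B \<circ> adjoint B) x)) = (B \<circ> adjoint B) x"
      by (simp only: comp_apply BM D(3))
    show "(B \<circ> adjoint B) ((adjoint A \<circ> A) x) \<bullet> y = x \<bullet> (B \<circ> adjoint B) ((adjoint A \<circ> A) y)"
      by (simp only: comp_apply BM D(4))
    show "(adjoint A \<circ> A) ((B \<circ> adjoint B) x) \<bullet> y = x \<bullet> (adjoint A \<circ> A) ((B \<circ> adjoint B) y)"
      by (simp only: comp_apply MB D(4))
  qed
qed

lemma is_mp_inverse_closed_range: "closed (range A)"
proof -
  have "range A = (\<lambda>z. A (B z) - z) -` {0}"
    using is_mp_inverseD(2)[OF mp] by (auto simp: image_iff) (metis rangeI)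
  moreover have "closed ((\<lambda>z. A (B z) - z) -` {0})"
    by (rule continuous_closed_vimage) (auto intro!: continuous_intros
        bounded_linear.continuous[OF bounded] bounded_linear.continuous[OF is_mp_inverseD(1)[OF mp]])
  ultimately show ?thesis
    by simp
qed

lemma orthogonal_ker_adjoint_subset_range: "(op_ker (adjoint A))\<^sup>\<bottom> \<subseteq> range A"
proof
  fix z
  assume z: "z \<in> (op_ker (adjoint A))\<^sup>\<bottom>"
  note D = is_mp_inverseD[OF mp] and F = is_mp_inverse_adjointD[OF bounded mp]
  define v where "v = z - A (B z)"
  have "adjoint A (A (B z)) = adjoint A z"
    using F(3) by (simp add: F(1))
  then have "v \<in> op_ker (adjoint A)"
    by (simp add: v_def op_ker_def linear_diff[OF bounded_linear.linear[OF bounded_linear_adjoint[OF bounded]]])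
  then have "v \<bullet> z = 0"
    using z by (simp add: orthogonal_comp_iff)
  moreover have "A (B z) \<bullet> v = 0"
    by (simp add: v_def inner_diff_right D(5)[of z] D(2))
  ultimately have "v \<bullet> v = 0"
    by (simp add: v_def inner_diff_left inner_commute)
  then have "z = A (B z)"
    by (simp add: v_def)
  then show "z \<in> range A"
    by (metis rangeI)
qed

lemma range_invariant_if_ker_adjoint_invariant:
  assumes S: "\<And>x y. S x \<bullet> y = x \<bullet> S y"
    and inv: "S ` op_ker (adjoint A) \<subseteq> op_ker (adjoint A)"
  shows "S ` range A \<subseteq> range A"
proof -
  have "S (A x) \<in> (op_ker (adjoint A))\<^sup>\<bottom>" for x
  proof -
    have "w \<bullet> S (A x) = 0" if "w \<in> op_ker (adjoint A)" for w
    proof -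
      have "adjoint A (S w) = 0"
        using inv that by (auto simp: op_ker_def)
      then show ?thesis
        by (simp add: S[symmetric] adjoint_inner_left[OF bounded, symmetric])
    qed
    then show ?thesis
      by (simp add: orthogonal_comp_iff)
  qed
  with orthogonal_ker_adjoint_subset_range show ?thesis
    by blast
qed

end

lemma cauchy_dual_eq_adjoint:
  fixes A B :: "'a::{real_inner,complete_space} \<Rightarrow> 'a"
  assumes bounded: "bounded_linear A" and mp: "is_mp_inverse A B"
  shows "cauchy_dual A = adjoint B"
proof -
  have "mp_inverse (adjoint A \<circ> A) = B \<circ> adjoint B"
    by (rule mp_inverse_eq[OF bounded_linear_comp[OF bounded_linear_adjoint[OF bounded] bounded]
          is_mp_inverse_gram[OF bounded mp]])
  then show ?thesis
    using is_mp_inverse_adjointD(1,4)[OF bounded mp] by (simp add: cauchy_dual_def fun_eq_iff)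
qed

section \<open>The reverse order law\<close>

lemma symmetric_commute_left:
  fixes X Y :: "'a::real_inner \<Rightarrow> 'a"
  assumes X: "\<And>u v. X u \<bullet> v = u \<bullet> X v" and Y: "\<And>u v. Y u \<bullet> v = u \<bullet> Y v"
    and inv: "\<And>u. X (Y (X u)) = Y (X u)"
  shows "X (Y u) = Y (X u)"
proof (rule vector_eq_ldot[THEN iffD1], intro allI)
  fix z
  have "z \<bullet> X (Y u) = Y (X z) \<bullet> u"
    by (simp only: X[symmetric] Y[symmetric])
  also have "\<dots> = X (Y (X z)) \<bullet> u"
    by (simp only: inv)
  also have "\<dots> = z \<bullet> X (Y (X u))"
    by (simp only: X Y)
  also have "\<dots> = z \<bullet> Y (X u)"
    by (simp only: inv)
  finally show "z \<bullet> X (Y u) = z \<bullet> Y (X u)" .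
qed

lemma symmetric_commute_right:
  fixes X Y :: "'a::real_inner \<Rightarrow> 'a"
  assumes X: "\<And>u v. X u \<bullet> v = u \<bullet> X v" and Y: "\<And>u v. Y u \<bullet> v = u \<bullet> Y v"
    and inv: "\<And>u. X (Y (X u)) = X (Y u)"
  shows "X (Y u) = Y (X u)"
proof -
  have "X (Y (X u)) = Y (X u)"
  proof (rule vector_eq_ldot[THEN iffD1], intro allI)
    fix z
    have "z \<bullet> X (Y (X u)) = X (Y (X z)) \<bullet> u"
      by (simp only: X[symmetric] Y[symmetric])
    also have "\<dots> = z \<bullet> Y (X u)"
      by (simp only: inv X Y)
    finally show "z \<bullet> X (Y (X u)) = z \<bullet> Y (X u)" .
  qed
  then show ?thesis
    by (simp only: inv)
qed

text \<open>B GB and GA A are the orthogonal projections onto R(B) and R(A*). The range conditions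
  make them commute with A*A and BB* respectively, and hence with each other.\<close>

context
  fixes A B GA GB :: "'a::{real_inner,complete_space} \<Rightarrow> 'a"
  assumes A: "bounded_linear A" and B: "bounded_linear B"
    and mpA: "is_mp_inverse A GA" and mpB: "is_mp_inverse B GB"
begin

lemma range_projection_commutes_gram:
  assumes C1: "range (adjoint A \<circ> A \<circ> B) \<subseteq> range B"
  shows "B (GB (adjoint A (A y))) = adjoint A (A (B (GB y)))"
proof (rule symmetric_commute_left)
  fix u
  obtain v where "adjoint A (A (B (GB u))) = B v"
    using C1 by (metis comp_apply rangeI subsetD rangeE)
  then show "B (GB (adjoint A (A (B (GB u))))) = adjoint A (A (B (GB u)))"
    by (simp add: is_mp_inverseD(2)[OF mpB])
qed (use is_mp_inverseD(5)[OF mpB] adjoint_comp_self_symmetric[OF A] in blast)+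

lemma mp_projections_commute:
  assumes C1: "range (adjoint A \<circ> A \<circ> B) \<subseteq> range B"
  shows "B (GB (GA (A y))) = GA (A (B (GB y)))"
proof (rule symmetric_commute_right[symmetric])
  interpret A: bounded_linear A by (rule A)
  interpret B: bounded_linear B by (rule B)
  interpret GA: bounded_linear GA by (rule is_mp_inverseD(1)[OF mpA])
  interpret GB: bounded_linear GB by (rule is_mp_inverseD(1)[OF mpB])
  fix u
  define w where "w = u - GA (A u)"
  have "A w = 0"
    by (simp add: w_def A.diff is_mp_inverseD(2)[OF mpA])
  have "A (B (GB w)) \<bullet> A (B (GB w)) = adjoint A (A (B (GB w))) \<bullet> B (GB w)"
    by (simp add: adjoint_inner_left[OF A])
  also have "\<dots> = B (GB (adjoint A (A w))) \<bullet> B (GB w)"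
    by (simp add: range_projection_commutes_gram[OF C1])
  also have "\<dots> = 0"
    using \<open>A w = 0\<close> by (simp add: linear_0[OF bounded_linear.linear[OF bounded_linear_adjoint[OF A]]])
  finally have "A (B (GB w)) = 0"
    by simp
  then show "GA (A (B (GB (GA (A u))))) = GA (A (B (GB u)))"
    by (simp add: w_def A.diff B.diff GB.diff GA.diff)
qed (use is_mp_inverseD(4)[OF mpA] is_mp_inverseD(5)[OF mpB] in blast)+

lemma coimage_projection_commutes_cogram:
  assumes C2: "range (B \<circ> adjoint B \<circ> adjoint A) \<subseteq> range (adjoint A)"
  shows "GA (A (B (adjoint B y))) = B (adjoint B (GA (A y)))"
proof (rule symmetric_commute_left)
  note F = is_mp_inverse_adjointD[OF A mpA]
  fix u
  obtain v where "B (adjoint B (adjoint A (adjoint GA u))) = adjoint A v"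
    using C2 by (metis comp_apply rangeI subsetD rangeE)
  then show "GA (A (B (adjoint B (GA (A u))))) = B (adjoint B (GA (A u)))"
    by (metis F(2) F(3))
qed (use is_mp_inverseD(4)[OF mpA] comp_adjoint_self_symmetric[OF B] in blast)+

lemma is_mp_inverse_comp:
  assumes C1: "range (adjoint A \<circ> A \<circ> B) \<subseteq> range B"
    and C2: "range (B \<circ> adjoint B \<circ> adjoint A) \<subseteq> range (adjoint A)"
  shows "is_mp_inverse (A \<circ> B) (GB \<circ> GA)"
proof -
  note DA = is_mp_inverseD[OF mpA] and FA = is_mp_inverse_adjointD[OF A mpA]
  note DB = is_mp_inverseD[OF mpB] and FB = is_mp_inverse_adjointD[OF B mpB]
  note PQ = mp_projections_commute[OF C1]
  have gram_GA: "adjoint A (A (GA y)) = adjoint A y" for y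
    by (metis FA(1) FA(3))
  have cogram_GB: "B (adjoint B (adjoint GB x)) = B x" for x
    by (simp add: FB(2) DB(2))
  show ?thesis
    unfolding is_mp_inverse_def comp_apply
  proof (intro conjI allI bounded_linear_compose[OF DB(1) DA(1)])
    fix x y
    show "A (B (GB (GA (A (B x))))) = A (B x)"
      by (simp only: PQ DA(2) DB(2))
    show "GB (GA (A (B (GB (GA x))))) = GB (GA x)"
      by (simp only: PQ[symmetric] DA(3) DB(3))
    have "A (B (GB (GA x))) \<bullet> y = B (GB (GA x)) \<bullet> adjoint A (A (GA y))"
      by (simp add: adjoint_inner_right[OF A] gram_GA)
    also have "\<dots> = GA x \<bullet> adjoint A (A (B (GB (GA y))))"
      by (simp add: DB(5) range_projection_commutes_gram[OF C1])
    also have "\<dots> = x \<bullet> A (B (GB (GA y)))"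
      by (simp add: adjoint_comp_self_symmetric[OF A, symmetric] gram_GA adjoint_inner_left[OF A])
    finally show "A (B (GB (GA x))) \<bullet> y = x \<bullet> A (B (GB (GA y)))" .
    have "GB (GA (A (B x))) \<bullet> y = GA (A (B (adjoint B (adjoint GB x)))) \<bullet> adjoint GB y"
      by (simp add: adjoint_inner_right[OF DB(1)] cogram_GB)
    also have "\<dots> = adjoint GB x \<bullet> GA (A (B (adjoint B (adjoint GB y))))"
      by (simp add: coimage_projection_commutes_cogram[OF C2] comp_adjoint_self_symmetric[OF B] DA(4))
    also have "\<dots> = x \<bullet> GB (GA (A (B y)))"
      by (simp only: cogram_GB adjoint_inner_left[OF DB(1)])
    finally show "GB (GA (A (B x))) \<bullet> y = x \<bullet> GB (GA (A (B y)))" .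
  qed
qed

end

section \<open>Operators with closed range\<close>

lemma closure_image_cball_interior_nonempty:
  fixes T :: "'a::real_normed_vector \<Rightarrow> 'b::{real_normed_vector,complete_space}"
  assumes "closed (range T)"
  shows "\<exists>k. top_of_set (range T) interior_of closure (T ` cball 0 (real (Suc k))) \<noteq> {}"
proof (rule ccontr)
  define F where "F k = closure (T ` cball 0 (real (Suc k)))" for k
  let ?X = "top_of_set (range T)"
  assume "\<not> (\<exists>k. ?X interior_of F k \<noteq> {})"
  then have no_interior: "?X interior_of F k = {}" for k
    by blast
  have F_range: "F k \<subseteq> range T" for k
    unfolding F_def by (rule closure_minimal) (use assms in auto)
  have "T x \<in> \<Union>(range F)" for x
  proof -
    obtain k :: nat where "norm x \<le> real k"
      using real_arch_simple by blast
    then have "T x \<in> F k"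
      unfolding F_def by (intro closure_subset[THEN subsetD] imageI) simp
    then show ?thesis
      by blast
  qed
  with F_range have F_cover: "\<Union>(range F) = range T"
    by blast
  have "?X interior_of \<Union>(range F) = {}"
  proof (rule Baire_category_alt)
    have "closedin euclidean (range T)"
      using assms by (rule closed_closedin[THEN iffD1])
    then show "completely_metrizable_space ?X \<or> locally_compact_space ?X \<and> regular_space ?X"
      by (intro disjI1 completely_metrizable_space_closedin[OF completely_metrizable_space_euclidean])
    show "countable (range F)"
      by simp
    have "closedin ?X (F k)" for k
      by (rule closed_subset[OF F_range]) (simp add: F_def)
    then show "closedin ?X S \<and> ?X interior_of S = {}" if "S \<in> range F" for S
      using that no_interior by blast
  qed
  moreover have "?X interior_of \<Union>(range F) = range T"
    using interior_of_topspace[of ?X] by (simp add: F_cover)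
  ultimately show False
    by simp
qed

lemma closed_range_ball_subset_closure_image_cball:
  fixes T :: "'a::real_normed_vector \<Rightarrow> 'b::{real_normed_vector,complete_space}"
  assumes "closed (range T)"
  shows "\<exists>K y0 e. 0 < K \<and> 0 < e \<and> y0 \<in> range T \<and>
    (\<forall>y\<in>range T. dist y y0 < e \<longrightarrow> y \<in> closure (T ` cball 0 K))"
proof -
  let ?X = "top_of_set (range T)"
  obtain k y0 where "y0 \<in> ?X interior_of closure (T ` cball 0 (real (Suc k)))"
    using closure_image_cball_interior_nonempty[OF assms] by blast
  then obtain U where U: "openin ?X U" "y0 \<in> U" "U \<subseteq> closure (T ` cball 0 (real (Suc k)))"
    unfolding interior_of_def by blast
  then obtain e where "0 < e" and ball: "\<And>y. y \<in> range T \<Longrightarrow> dist y y0 < e \<Longrightarrow> y \<in> U"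
    unfolding openin_euclidean_subtopology_iff by blast
  moreover have "y0 \<in> range T"
    using U(1,2) openin_subset by fastforce
  ultimately show ?thesis
    using U(3) by (intro exI[of _ "real (Suc k)"] exI[of _ y0] exI[of _ e]) auto
qed

lemma inner_closure_image_cball_le:
  fixes T :: "'a::{real_inner,complete_space} \<Rightarrow> 'b::real_inner"
  assumes bounded: "bounded_linear T" and "z \<in> closure (T ` cball 0 K)"
  shows "\<bar>z \<bullet> w\<bar> \<le> K * norm (adjoint T w)"
proof -
  have "T ` cball 0 K \<subseteq> {z. \<bar>z \<bullet> w\<bar> \<le> K * norm (adjoint T w)}"
  proof clarify
    fix x :: 'a
    assume "x \<in> cball 0 K"
    then have "\<bar>x \<bullet> adjoint T w\<bar> \<le> K * norm (adjoint T w)"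
      using Cauchy_Schwarz_ineq2[of x "adjoint T w"] by (simp add: mult_right_mono order_trans)
    then show "\<bar>T x \<bullet> w\<bar> \<le> K * norm (adjoint T w)"
      by (simp add: adjoint_inner_right[OF bounded])
  qed
  moreover have "closed {z. \<bar>z \<bullet> w\<bar> \<le> K * norm (adjoint T w)}"
    by (rule closed_Collect_le) (auto intro!: continuous_intros)
  ultimately show ?thesis
    using closure_minimal assms(2) by blast
qed

context
  fixes T :: "'a::{real_inner,complete_space} \<Rightarrow> 'b::{real_inner,complete_space}"
  assumes bounded: "bounded_linear T" and closed: "closed (range T)"
begin

text \<open>Baire gives a ball around y0 in R(T) inside the closure of T(K-ball); the bound
  inner_closure_image_cball_le at y0 + y and y0 - y isolates the inner product of y with w.\<close>

lemma adjoint_bounded_below_on_range: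
  "\<exists>c>0. \<forall>w\<in>range T. c * norm w \<le> norm (adjoint T w)"
proof -
  obtain K y0 e where "0 < K" "0 < e" "y0 \<in> range T"
    and ball: "\<And>y. y \<in> range T \<Longrightarrow> dist y y0 < e \<Longrightarrow> y \<in> closure (T ` cball 0 K)"
    using closed_range_ball_subset_closure_image_cball[OF closed] by blast
  have bounded_below: "e / (2 * K) * norm w \<le> norm (adjoint T w)" if "w \<in> range T" "w \<noteq> 0" for w
  proof -
    define y where "y = (e / (2 * norm w)) *\<^sub>R w"
    have "y \<in> range T"
      using subspace_range[OF bounded] that(1) by (simp add: y_def subspace_scale)
    then have "y0 + y \<in> range T" "y0 - y \<in> range T"
      using subspace_range[OF bounded] \<open>y0 \<in> range T\<close> by (simp_all add: subspace_add subspace_diff)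
    moreover have "norm y = e / 2"
      using \<open>w \<noteq> 0\<close> \<open>0 < e\<close> by (simp add: y_def)
    then have "dist (y0 + y) y0 < e" "dist (y0 - y) y0 < e"
      using \<open>0 < e\<close> by (simp_all add: dist_norm)
    ultimately have "y0 + y \<in> closure (T ` cball 0 K)" "y0 - y \<in> closure (T ` cball 0 K)"
      by (simp_all add: ball)
    then have "\<bar>(y0 + y) \<bullet> w\<bar> \<le> K * norm (adjoint T w)" "\<bar>(y0 - y) \<bullet> w\<bar> \<le> K * norm (adjoint T w)"
      by (simp_all add: inner_closure_image_cball_le[OF bounded])
    moreover have "2 * (y \<bullet> w) = (y0 + y) \<bullet> w - (y0 - y) \<bullet> w"
      by (simp add: inner_add_left inner_diff_left)
    moreover have "y \<bullet> w = e / 2 * norm w"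
      using \<open>w \<noteq> 0\<close> by (simp add: y_def power2_norm_eq_inner[symmetric] power2_eq_square)
    ultimately have "e * norm w \<le> 2 * (K * norm (adjoint T w))"
      using abs_ge_self[of "(y0 + y) \<bullet> w"] abs_ge_minus_self[of "(y0 - y) \<bullet> w"] by linarith
    with \<open>0 < K\<close> show ?thesis
      by (simp add: field_simps)
  qed
  show ?thesis
  proof (intro exI[of _ "e / (2 * K)"] conjI ballI)
    show "e / (2 * K) > 0"
      using \<open>0 < e\<close> \<open>0 < K\<close> by simp
    fix w
    assume "w \<in> range T"
    then show "e / (2 * K) * norm w \<le> norm (adjoint T w)"
      using bounded_below[of w] by (cases "w = 0") simp_all
  qed
qed

lemma range_adjoint_eq_image_range: "range (adjoint T) = adjoint T ` range T"
proof -
  have "adjoint T w = adjoint T (orthogonal_projection (range T) w)" for w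
  proof -
    have "w - orthogonal_projection (range T) w \<in> op_ker (adjoint T)"
      using orthogonal_projection_orthogonal[OF subspace_range[OF bounded] closed]
      by (simp add: op_ker_adjoint[OF bounded])
    then show ?thesis
      by (simp add: op_ker_def linear_diff[OF bounded_linear.linear[OF bounded_linear_adjoint[OF bounded]]])
  qed
  then show ?thesis
    using orthogonal_projection_in[OF subspace_range[OF bounded] closed] by blast
qed

lemma closed_range_adjoint: "closed (range (adjoint T))"
proof -
  obtain c where "c > 0" "\<forall>w\<in>range T. c * norm w \<le> norm (adjoint T w)"
    using adjoint_bounded_below_on_range by blast
  then have "complete (adjoint T ` range T)"
    using closed
    by (intro complete_isometric_image[OF _ subspace_range[OF bounded] bounded_linear_adjoint[OF bounded]])
      (auto simp: complete_eq_closed)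
  then show ?thesis
    by (simp add: range_adjoint_eq_image_range complete_eq_closed)
qed

lemma orthogonal_ker_subset_range_adjoint: "(op_ker T)\<^sup>\<bottom> \<subseteq> range (adjoint T)"
proof
  fix x
  assume x: "x \<in> (op_ker T)\<^sup>\<bottom>"
  let ?R = "range (adjoint T)"
  note P = orthogonal_projection_in orthogonal_projection_orthogonal
  note P = P[OF subspace_range[OF bounded_linear_adjoint[OF bounded]] closed_range_adjoint]
  define q where "q = x - orthogonal_projection ?R x"
  have "adjoint T (T q) \<bullet> q = 0"
    using P(2)[of x] by (simp add: q_def orthogonal_comp_iff)
  then have "T q \<bullet> T q = 0"
    by (simp only: adjoint_inner_left[OF bounded])
  then have "x \<bullet> q = 0"
    using x by (simp add: orthogonal_comp_iff op_ker_def inner_commute)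
  moreover have "orthogonal_projection ?R x \<bullet> q = 0"
    using P unfolding q_def orthogonal_comp_iff by blast
  ultimately have "q \<bullet> q = 0"
    by (simp add: q_def inner_diff_left)
  then show "x \<in> ?R"
    using P(1)[of x] by (simp add: q_def)
qed

lemma bounded_below_on_orthogonal_ker:
  "\<exists>c>0. \<forall>x\<in>(op_ker T)\<^sup>\<bottom>. c * norm x \<le> norm (T x)"
proof -
  obtain c where "c > 0" and c: "\<And>w. w \<in> range T \<Longrightarrow> c * norm w \<le> norm (adjoint T w)"
    using adjoint_bounded_below_on_range by blast
  have "c * norm x \<le> norm (T x)" if "x \<in> (op_ker T)\<^sup>\<bottom>" for x
  proof -
    obtain w where "w \<in> range T" "x = adjoint T w"
      using orthogonal_ker_subset_range_adjoint \<open>x \<in> (op_ker T)\<^sup>\<bottom>\<close>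
      by (auto simp: range_adjoint_eq_image_range)
    then have "c * (norm x * norm x) \<le> norm (T x) * (c * norm w)"
      using \<open>c > 0\<close> norm_cauchy_schwarz[of "T x" w]
      by (simp add: adjoint_inner_right[OF bounded] flip: power2_eq_square power2_norm_eq_inner)
    also have "\<dots> \<le> norm (T x) * norm x"
      using c \<open>w \<in> range T\<close> \<open>x = adjoint T w\<close> by (simp add: mult_left_mono)
    finally show ?thesis
      using \<open>c > 0\<close> by (cases "x = 0") (auto simp: algebra_simps)
  qed
  with \<open>c > 0\<close> show ?thesis
    by blast
qed

end

definition restricted_inverse :: "('a::real_inner \<Rightarrow> 'b::real_inner) \<Rightarrow> 'b \<Rightarrow> 'a" where
  "restricted_inverse T y = (SOME x. x \<in> (op_ker T)\<^sup>\<bottom> \<and> T x = orthogonal_projection (range T) y)"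

context
  fixes T :: "'a::{real_inner,complete_space} \<Rightarrow> 'b::{real_inner,complete_space}"
  assumes bounded: "bounded_linear T" and closed: "closed (range T)"
begin

private abbreviation "K \<equiv> op_ker T"
private abbreviation "P \<equiv> orthogonal_projection (range T)"
private abbreviation "G \<equiv> restricted_inverse T"

lemma restricted_inverse:
  "G y \<in> K\<^sup>\<bottom>" "T (G y) = P y"
proof -
  interpret T: bounded_linear T by (rule bounded)
  obtain u where "P y = T u"
    using orthogonal_projection_in[OF subspace_range[OF bounded] closed] by blast
  moreover have "T (orthogonal_projection K u) = 0"
    using orthogonal_projection_in[OF subspace_op_ker[OF bounded] closed_op_ker[OF bounded]]
    by (simp add: op_ker_def)
  ultimately have "u - orthogonal_projection K u \<in> K\<^sup>\<bottom> \<and> T (u - orthogonal_projection K u) = P y"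
    using orthogonal_projection_orthogonal[OF subspace_op_ker[OF bounded] closed_op_ker[OF bounded]]
    by (simp add: T.diff)
  then have "\<exists>x. x \<in> K\<^sup>\<bottom> \<and> T x = P y"
    by blast
  from someI_ex[OF this] show "G y \<in> K\<^sup>\<bottom>" "T (G y) = P y"
    unfolding restricted_inverse_def by blast+
qed

lemma restricted_inverse_eqI:
  assumes "x \<in> K\<^sup>\<bottom>" "T x = P y"
  shows "G y = x"
proof -
  interpret T: bounded_linear T by (rule bounded)
  have "G y - x \<in> K"
    using restricted_inverse(2) assms(2) by (simp add: op_ker_def T.diff)
  moreover have "G y - x \<in> K\<^sup>\<bottom>"
    using restricted_inverse(1) assms(1) by (rule subspace_diff[OF subspace_orthogonal_comp])
  ultimately have "G y - x \<in> K \<inter> K\<^sup>\<bottom>"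
    by blast
  then show ?thesis
    unfolding orthogonal_Int_0[OF subspace_op_ker[OF bounded]] by simp
qed

lemma bounded_linear_restricted_inverse: "bounded_linear G"
proof -
  interpret T: bounded_linear T by (rule bounded)
  note linear_P = linear_orthogonal_projection[OF subspace_range[OF bounded] closed]
  have "linear G"
  proof
    fix a b and r :: real
    show "G (a + b) = G a + G b"
      by (rule restricted_inverse_eqI)
        (simp_all add: restricted_inverse T.add linear_add[OF linear_P]
          subspace_add[OF subspace_orthogonal_comp])
    show "G (r *\<^sub>R b) = r *\<^sub>R G b"
      by (rule restricted_inverse_eqI)
        (simp_all add: restricted_inverse T.scale linear_scale[OF linear_P]
          subspace_scale[OF subspace_orthogonal_comp])
  qed
  moreover obtain c where "c > 0" and c: "\<And>x. x \<in> K\<^sup>\<bottom> \<Longrightarrow> c * norm x \<le> norm (T x)"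
    using bounded_below_on_orthogonal_ker[OF bounded closed] by blast
  have "norm (G y) \<le> norm y * (1 / c)" for y
  proof -
    have "c * norm (G y) \<le> norm y"
      using c[OF restricted_inverse(1)[of y]]
        norm_orthogonal_projection_le[OF subspace_range[OF bounded] closed, of y]
      by (simp add: restricted_inverse(2))
    with \<open>c > 0\<close> show ?thesis
      by (simp add: field_simps)
  qed
  ultimately show ?thesis
    by (intro bounded_linear_intro[where K = "1 / c"]) (auto simp: linear_add linear_scale)
qed

end

lemma is_mp_inverse_restricted_inverse:
  fixes T :: "'a::{real_inner,complete_space} \<Rightarrow> 'a"
  assumes bounded: "bounded_linear T" and closed: "closed (range T)"
  shows "is_mp_inverse T (restricted_inverse T)"
proof -
  let ?G = "restricted_inverse T" and ?PK = "orthogonal_projection (op_ker T)"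
  note G = restricted_inverse[OF bounded closed] and G_eqI = restricted_inverse_eqI[OF bounded closed]
  note PY = orthogonal_projection_in orthogonal_projection_id orthogonal_projection_symmetric
  note PY = PY[OF subspace_range[OF bounded] closed]
  note PK = orthogonal_projection_in orthogonal_projection_orthogonal orthogonal_projection_unique
    orthogonal_projection_symmetric
  note PK = PK[OF subspace_op_ker[OF bounded] closed_op_ker[OF bounded]]
  have T_PK: "T (x - ?PK x) = T x" for x
    using PK(1) by (simp add: linear_diff[OF bounded_linear.linear[OF bounded]] op_ker_def)
  have "?G (T x) = x - ?PK x" for x
    by (rule G_eqI) (simp_all add: PK(2) T_PK PY(2))
  moreover have "?G (orthogonal_projection (range T) y) = ?G y" for y
    by (rule G_eqI) (simp_all add: G PY(1,2))
  moreover have "?PK (?G y) = 0" for y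
    by (rule PK(3)) (simp_all add: G(1) subspace_0[OF subspace_op_ker[OF bounded]])
  ultimately show ?thesis
    unfolding is_mp_inverse_def
    by (simp add: G T_PK PY(2,3) PK(4) inner_diff_left inner_diff_right
        bounded_linear_restricted_inverse[OF bounded closed])
qed

section \<open>Powers of an operator\<close>

lemma funpow_image_range_funpow:
  fixes F T :: "'a \<Rightarrow> 'a"
  assumes inv: "\<And>j. 1 \<le> j \<Longrightarrow> j \<le> m \<Longrightarrow> (F \<circ> T) ` range (T ^^ j) \<subseteq> range (T ^^ j)"
  shows "1 \<le> j \<Longrightarrow> j + k \<le> m + 1 \<Longrightarrow> (F ^^ k) ` range (T ^^ (k + j)) \<subseteq> range (T ^^ j)"
proof (induction k arbitrary: j)
  case 0
  then show ?case
    by simp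
next
  case (Suc k)
  have "(F ^^ Suc k) ` range (T ^^ (Suc k + j)) = F ` (F ^^ k) ` range (T ^^ (k + Suc j))"
    by (simp add: image_comp)
  also have "\<dots> \<subseteq> F ` range (T ^^ Suc j)"
    using Suc.IH[of "Suc j"] Suc.prems by (intro image_mono) auto
  also have "\<dots> = (F \<circ> T) ` range (T ^^ j)"
    by (simp add: image_comp)
  also have "\<dots> \<subseteq> range (T ^^ j)"
    using inv Suc.prems by simp
  finally show ?case .
qed

lemma range_adjoint_funpow_comp_subset:
  fixes T :: "'a::{real_inner,complete_space} \<Rightarrow> 'a"
  assumes "bounded_linear T"
    and "\<And>j. 1 \<le> j \<Longrightarrow> j \<le> i \<Longrightarrow> (adjoint T \<circ> T) ` range (T ^^ j) \<subseteq> range (T ^^ j)"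
  shows "range (adjoint (T ^^ i) \<circ> T ^^ i \<circ> T) \<subseteq> range T"
proof -
  have "range (adjoint (T ^^ i) \<circ> T ^^ i \<circ> T) = (adjoint T ^^ i) ` range (T ^^ (i + 1))"
    by (simp only: adjoint_funpow[OF assms(1)] comp_assoc Suc_eq_plus1[symmetric]
        funpow_Suc_right[symmetric] image_comp)
  also have "\<dots> \<subseteq> range (T ^^ 1)"
    using assms(2) by (intro funpow_image_range_funpow[where m = i]) auto
  finally show ?thesis
    by simp
qed

lemma is_mp_inverse_funpow:
  fixes T G :: "'a::{real_inner,complete_space} \<Rightarrow> 'a"
  assumes bounded: "bounded_linear T" and mp: "is_mp_inverse T G"
    and ker_adjoint_inv: "\<And>j. j \<in> {1..<n} \<Longrightarrow>
      (adjoint T \<circ> T) ` op_ker (adjoint T ^^ j) \<subseteq> op_ker (adjoint T ^^ j)"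
    and ker_inv: "\<And>j. j \<in> {1..<n} \<Longrightarrow> (T \<circ> adjoint T) ` op_ker (T ^^ j) \<subseteq> op_ker (T ^^ j)"
  shows "i \<in> {1..n} \<Longrightarrow> is_mp_inverse (T ^^ i) (G ^^ i)"
proof (induction i rule: less_induct)
  case (less i)
  show ?case
  proof (cases "i = 1")
    case True
    then show ?thesis
      using mp by simp
  next
    case False
    then obtain i' where i: "i = Suc i'" "i' \<in> {1..<n}"
      using less.prems by (cases i) auto
    have mp_j: "is_mp_inverse (T ^^ j) (G ^^ j)" if "j \<in> {1..i'}" for j
      using less.IH that i by auto
    have bounded_j: "bounded_linear (T ^^ j)" for j
      by (rule bounded_linear_funpow[OF bounded])
    have "(adjoint T \<circ> T) ` range (T ^^ j) \<subseteq> range (T ^^ j)" if "1 \<le> j" "j \<le> i'" for j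
      using ker_adjoint_inv[of j] that i
      by (intro range_invariant_if_ker_adjoint_invariant[OF bounded_j mp_j])
        (simp_all add: adjoint_comp_self_symmetric[OF bounded] adjoint_funpow[OF bounded])
    then have C1: "range (adjoint (T ^^ i') \<circ> T ^^ i' \<circ> T) \<subseteq> range T"
      by (rule range_adjoint_funpow_comp_subset[OF bounded])
    have "(T \<circ> adjoint T) ` range (adjoint (T ^^ i')) \<subseteq> range (adjoint (T ^^ i'))"
      using ker_inv[of i'] i
      by (intro range_invariant_if_ker_adjoint_invariant[OF bounded_linear_adjoint[OF bounded_j]
            is_mp_inverse_adjoint[OF bounded_j mp_j]])
        (simp_all add: comp_adjoint_self_symmetric[OF bounded] adjoint_adjoint_bounded[OF bounded_j])
    then have C2: "range (T \<circ> adjoint T \<circ> adjoint (T ^^ i')) \<subseteq> range (adjoint (T ^^ i'))"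
      by (simp add: image_comp)
    have "is_mp_inverse (T ^^ i' \<circ> T) (G \<circ> G ^^ i')"
      using i by (intro is_mp_inverse_comp[OF bounded_j bounded mp_j mp C1 C2]) auto
    then show ?thesis
      by (simp only: i funpow_Suc_right[symmetric] funpow.simps(2)[symmetric])
  qed
qed

theorem mainTheorem6:
  fixes T :: "'a::{real_inner,complete_space} \<Rightarrow> 'a" and n :: nat
  assumes "bounded_linear T"
    and "closed (range T)"
    and "n \<ge> 2"
    and "\<forall>i\<in>{1..n-1}. (adjoint T \<circ> T) ` op_ker (adjoint T ^^ i) \<subseteq> op_ker (adjoint T ^^ i)"
    and "\<forall>i\<in>{1..n-1}. (T \<circ> adjoint T) ` op_ker (T ^^ i) \<subseteq> op_ker (T ^^ i)"
  shows "\<forall>i\<in>{1..n}. closed (range (T ^^ i)) \<and> cauchy_dual (T ^^ i) = cauchy_dual T ^^ i"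
proof
  fix i
  assume i: "i \<in> {1..n}"
  let ?G = "restricted_inverse T"
  have G: "is_mp_inverse T ?G"
    by (rule is_mp_inverse_restricted_inverse[OF assms(1,2)])
  have "is_mp_inverse (T ^^ i) (?G ^^ i)"
  proof (rule is_mp_inverse_funpow[OF assms(1) G _ _ i])
    fix j
    assume "j \<in> {1..<n}"
    then have "j \<in> {1..n - 1}"
      by auto
    then show "(adjoint T \<circ> T) ` op_ker (adjoint T ^^ j) \<subseteq> op_ker (adjoint T ^^ j)"
      and "(T \<circ> adjoint T) ` op_ker (T ^^ j) \<subseteq> op_ker (T ^^ j)"
      using assms(4,5) by blast+
  qed
  then show "closed (range (T ^^ i)) \<and> cauchy_dual (T ^^ i) = cauchy_dual T ^^ i"
    using bounded_linear_funpow[OF assms(1)]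
    by (simp add: is_mp_inverse_closed_range cauchy_dual_eq_adjoint cauchy_dual_eq_adjoint[OF assms(1) G]
        adjoint_funpow[OF is_mp_inverseD(1)[OF G]])
qed

end
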